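(* For the SVIQS system, let $\widetilde R_0=\frac{1}{\langle k\rangle}\sum_{i=1}^n\frac{\lambda(i)\varphi(i)p(i)\Lambda_i}{d(\gamma+\beta+d)}$ (the value of $R_0$ when all $\mu_k=0$). If $\widetilde R_0<1$, then the disease-free equilibrium $E^0$ is globally asymptotically stable: it is Lyapunov stable, and every solution with initial data satisfying $S_k(0),V_k(0),I_k(0),Q_k(0)\ge0$ and $S_k(0)+V_k(0)+I_k(0)+Q_k(0)=N_k^*$ for all $k$ converges to $E^0$ as $t\to\infty$.
   Context: Fix an integer $n\ge1$ and numbers $p(1),\dots,p(n)>0$ with $\sum_{k=1}^n p(k)=1$; set $\langle k\rangle=\sum_{k=1}^n kp(k)$. Fix constants $b>d>0$ and let $\Phi^*>0$ satisfy $\Phi^*=\frac{1}{\langle k\rangle}\sum_{i=1}^n \frac{i\,p(i)\,b\Phi^*}{d+bi\Phi^*}$. For $k=1,\dots,n$ put $N_k^*=\frac{bk\Phi^*}{d+bk\Phi^*}\in(0,1)$ and $\Lambda_k=bk(1-N_k^* )\Phi^*$ (so $\Lambda_k=dN_k^*>0$). Parameters: $\lambda(k)>0$, $\varphi(k)>0$, $\mu_k>0$ for $k=1,\dots,n$; constants $\beta,\gamma,\eta,\omega>0$ and $\delta\in[0,1]$. For functions $I_1(t),\dots,I_n(t)$ set $\Theta(t)=\frac{1}{\langle k\rangle}\sum_{i=1}^n\varphi(i)p(i)I_i(t)$. The SVIQS system is, for $k=1,\dots,n$: $S_k'=\Lambda_k-\lambda(k)S_k\Theta+\gamma I_k+\eta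 Q_k+\omega V_k-(\mu_k+d)S_k$, $V_k'=\mu_kS_k-\delta\lambda(k)V_k\Theta-(d+\omega)V_k$, $I_k'=\lambda(k)S_k\Theta+\delta\lambda(k)V_k\Theta-(\gamma+\beta+d)I_k$, $Q_k'=\beta I_k-(\eta+d)Q_k$. Its disease-free equilibrium $E^0$ is $S_k^0=\frac{(d+\omega)N_k^*}{\mu_k+\omega+d}$, $V_k^0=\frac{\mu_kN_k^*}{\mu_k+\omega+d}$, $I_k^0=Q_k^0=0$. *)

theory Defs
  imports "HOL-Analysis.Analysis"
begin

definition mean_deg :: "nat \<Rightarrow> (nat \<Rightarrow> real) \<Rightarrow> real" where
  "mean_deg n p = (\<Sum>k=1..n. real k * p k)"

definition Nstar :: "real \<Rightarrow> real \<Rightarrow> real \<Rightarrow> nat \<Rightarrow> real" where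
  "Nstar b d Phi k = b * real k * Phi / (d + b * real k * Phi)"

definition Lam :: "real \<Rightarrow> real \<Rightarrow> real \<Rightarrow> nat \<Rightarrow> real" where
  "Lam b d Phi k = b * real k * (1 - Nstar b d Phi k) * Phi"

definition Theta :: "nat \<Rightarrow> (nat \<Rightarrow> real) \<Rightarrow> (nat \<Rightarrow> real) \<Rightarrow> (nat \<Rightarrow> real \<Rightarrow> real) \<Rightarrow> real \<Rightarrow> real" where
  "Theta n p phi I t = (1 / mean_deg n p) * (\<Sum>i=1..n. phi i * p i * I i t)"

definition sviqs_solution ::
  "nat \<Rightarrow> (nat \<Rightarrow> real) \<Rightarrow> real \<Rightarrow> real \<Rightarrow> real \<Rightarrow>
   (nat \<Rightarrow> real) \<Rightarrow> (nat \<Rightarrow> real) \<Rightarrow> (nat \<Rightarrow> real) \<Rightarrow>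
   real \<Rightarrow> real \<Rightarrow> real \<Rightarrow> real \<Rightarrow> real \<Rightarrow>
   (nat \<Rightarrow> real \<Rightarrow> real) \<Rightarrow> (nat \<Rightarrow> real \<Rightarrow> real) \<Rightarrow>
   (nat \<Rightarrow> real \<Rightarrow> real) \<Rightarrow> (nat \<Rightarrow> real \<Rightarrow> real) \<Rightarrow> bool" where
  "sviqs_solution n p b d Phi lam phi mu beta gamma eta omega dlt S V I Q \<longleftrightarrow>
    (\<forall>k\<in>{1..n}. \<forall>t\<ge>0.
      ((S k) has_real_derivative
         (Lam b d Phi k - lam k * S k t * Theta n p phi I t + gamma * I k t + eta * Q k t
          + omega * V k t - (mu k + d) * S k t)) (at t within {0..}) \<and>
      ((V k) has_real_derivative
         (mu k * S k t - dlt * lam k * V k t * Theta n p phi I t - (d + omega) * V k t))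
         (at t within {0..}) \<and>
      ((I k) has_real_derivative
         (lam k * S k t * Theta n p phi I t + dlt * lam k * V k t * Theta n p phi I t
          - (gamma + beta + d) * I k t)) (at t within {0..}) \<and>
      ((Q k) has_real_derivative (beta * I k t - (eta + d) * Q k t)) (at t within {0..}))"

definition S0 :: "real \<Rightarrow> real \<Rightarrow> real \<Rightarrow> (nat \<Rightarrow> real) \<Rightarrow> real \<Rightarrow> nat \<Rightarrow> real" where
  "S0 b d Phi mu omega k = (d + omega) * Nstar b d Phi k / (mu k + omega + d)"

definition V0 :: "real \<Rightarrow> real \<Rightarrow> real \<Rightarrow> (nat \<Rightarrow> real) \<Rightarrow> real \<Rightarrow> nat \<Rightarrow> real" where
  "V0 b d Phi mu omega k = mu k * Nstar b d Phi k / (mu k + omega + d)"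

definition feasible_init ::
  "nat \<Rightarrow> real \<Rightarrow> real \<Rightarrow> real \<Rightarrow>
   (nat \<Rightarrow> real \<Rightarrow> real) \<Rightarrow> (nat \<Rightarrow> real \<Rightarrow> real) \<Rightarrow>
   (nat \<Rightarrow> real \<Rightarrow> real) \<Rightarrow> (nat \<Rightarrow> real \<Rightarrow> real) \<Rightarrow> bool" where
  "feasible_init n b d Phi S V I Q \<longleftrightarrow>
    (\<forall>k\<in>{1..n}. S k 0 \<ge> 0 \<and> V k 0 \<ge> 0 \<and> I k 0 \<ge> 0 \<and> Q k 0 \<ge> 0 \<and>
       S k 0 + V k 0 + I k 0 + Q k 0 = Nstar b d Phi k)"

definition R0_tilde ::
  "nat \<Rightarrow> (nat \<Rightarrow> real) \<Rightarrow> real \<Rightarrow> real \<Rightarrow> real \<Rightarrow> (nat \<Rightarrow> real) \<Rightarrow> (nat \<Rightarrow> real)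
   \<Rightarrow> real \<Rightarrow> real \<Rightarrow> real" where
  "R0_tilde n p b d Phi lam phi beta gamma =
    (1 / mean_deg n p) *
    (\<Sum>i=1..n. lam i * phi i * p i * Lam b d Phi i / (d * (gamma + beta + d)))"

end

theory Submission
  imports Defs
begin

text \<open>Solutions stay nonnegative because the vector field is quasi-positive: a negative
  component can only decrease at a rate proportional to the size of the negative parts.
  The population of each degree class is then conserved, \<open>S\<^sub>k + V\<^sub>k + I\<^sub>k + Q\<^sub>k = N\<^sub>k\<^sup>*\<close>,
  so \<open>S\<^sub>k + \<delta> V\<^sub>k \<le> N\<^sub>k\<^sup>*\<close> and the force of infection satisfies
  \<open>\<Theta>' \<le> - (\<gamma> + \<beta> + d) (1 - R0) \<Theta>\<close>. For \<open>R0 < 1\<close> it decays exponentially, and a cascade of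
  linear comparison estimates (\<open>\<Theta> \<rightarrow> I \<rightarrow> Q \<rightarrow> V\<close>, then \<open>S\<close> by conservation) bounds the
  distance to the disease-free equilibrium by a fixed multiple of the initial deviation times
  \<open>exp (- r t)\<close>. This one estimate yields both Lyapunov stability and global attractivity.\<close>

lemma mvt_on_nonneg_reals:
  fixes f f' :: "real \<Rightarrow> real"
  assumes deriv: "\<And>t. 0 \<le> t \<Longrightarrow> (f has_real_derivative f' t) (at t within {0..})"
    and "0 \<le> a" "a < b"
  obtains \<xi> where "a < \<xi>" "\<xi> < b" "f b - f a = f' \<xi> * (b - a)"
proof -
  have "\<exists>\<xi>\<in>{a<..<b}. f b - f a = (\<lambda>h. f' \<xi> * h) (b - a)"
  proof (rule mvt_simple[OF \<open>a < b\<close>])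
    fix \<xi> assume "a \<le> \<xi>" "\<xi> \<le> b"
    then have "(f has_real_derivative f' \<xi>) (at \<xi> within {a..b})"
      using assms(2) by (intro has_field_derivative_subset[OF deriv]) auto
    then show "(f has_derivative (\<lambda>h. f' \<xi> * h)) (at \<xi> within {a..b})"
      by (simp add: has_field_derivative_def)
  qed
  then show thesis using that by auto
qed

lemma nonincreasing_on_nonneg_reals:
  fixes f f' :: "real \<Rightarrow> real"
  assumes "\<And>t. 0 \<le> t \<Longrightarrow> (f has_real_derivative f' t) (at t within {0..})"
    and "\<And>t. 0 \<le> t \<Longrightarrow> f' t \<le> 0" and "0 \<le> t"
  shows "f t \<le> f 0"
proof (cases "t = 0")
  case False
  with assms obtain \<xi> where "0 < \<xi>" "f t - f 0 = f' \<xi> * t"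
    by (metis diff_zero mvt_on_nonneg_reals order.refl order_less_le)
  moreover have "f' \<xi> * t \<le> 0"
    using assms \<open>0 < \<xi>\<close> by (simp add: mult_nonpos_nonneg)
  ultimately show ?thesis by simp
qed simp

text \<open>With \<open>K = C/(a - r)\<close>, the integrating factor \<open>exp (a t)\<close> makes
  \<open>(f t - K exp (- r t)) exp (a t)\<close> nonincreasing.\<close>
lemma exp_decay_of_deriv_le:
  fixes f f' :: "real \<Rightarrow> real"
  assumes deriv: "\<And>t. 0 \<le> t \<Longrightarrow> (f has_real_derivative f' t) (at t within {0..})"
    and bound: "\<And>t. 0 \<le> t \<Longrightarrow> f' t \<le> - a * f t + C * exp (- r * t)"
    and "r < a" "0 \<le> C" "0 \<le> t"
  shows "f t \<le> (\<bar>f 0\<bar> + C / (a - r)) * exp (- r * t)"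
proof -
  define K where "K = C / (a - r)"
  have "0 \<le> K" using \<open>r < a\<close> \<open>0 \<le> C\<close> by (simp add: K_def)
  define h where "h s = f s - K * exp (- r * s)" for s
  have C_eq: "C = K * (a - r)" using \<open>r < a\<close> by (simp add: K_def)
  have "h t * exp (a * t) \<le> h 0 * exp (a * 0)"
  proof (rule nonincreasing_on_nonneg_reals[where f = "\<lambda>s. h s * exp (a * s)"])
    fix s :: real assume "0 \<le> s"
    have "((\<lambda>s. h s * exp (a * s)) has_real_derivative
        (f' s + K * (exp (- r * s) * r)) * exp (a * s) + h s * (exp (a * s) * a)) (at s within {0..})"
      unfolding h_def using deriv[OF \<open>0 \<le> s\<close>] by (auto intro!: derivative_eq_intros)
    moreover have "(f' s + K * (exp (- r * s) * r)) * exp (a * s) + h s * (exp (a * s) * a)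
        = exp (a * s) * (f' s + a * f s - C * exp (- r * s))"
      by (simp add: h_def C_eq algebra_simps)
    ultimately show "((\<lambda>s. h s * exp (a * s)) has_real_derivative
        exp (a * s) * (f' s + a * f s - C * exp (- r * s))) (at s within {0..})" by simp
    show "exp (a * s) * (f' s + a * f s - C * exp (- r * s)) \<le> 0"
      using bound[OF \<open>0 \<le> s\<close>] by (simp add: mult_nonneg_nonpos)
  qed (use \<open>0 \<le> t\<close> in simp)
  then have "h t \<le> h 0 * exp (- a * t)"
    by (simp add: exp_minus field_simps)
  also have "\<dots> \<le> \<bar>f 0\<bar> * exp (- a * t)"
    using \<open>0 \<le> K\<close> by (intro mult_right_mono) (auto simp: h_def)
  also have "\<dots> \<le> \<bar>f 0\<bar> * exp (- r * t)"
    using \<open>r < a\<close> \<open>0 \<le> t\<close> by (intro mult_left_mono) (auto intro: mult_right_mono)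
  finally show ?thesis by (simp add: h_def K_def algebra_simps)
qed

lemma abs_le_exp_decay:
  fixes f f' :: "real \<Rightarrow> real"
  assumes deriv: "\<And>t. 0 \<le> t \<Longrightarrow> (f has_real_derivative f' t) (at t within {0..})"
    and bound: "\<And>t. 0 \<le> t \<Longrightarrow> \<bar>f' t + a * f t\<bar> \<le> c * D * exp (- r * t)"
    and "\<bar>f 0\<bar> \<le> D" "r < a" "0 \<le> c" "0 \<le> t"
  shows "\<bar>f t\<bar> \<le> (1 + c / (a - r)) * D * exp (- r * t)"
proof -
  have "0 \<le> c * D" using assms by (simp add: order_trans[OF abs_ge_zero])
  have upper: "f' s \<le> - a * f s + c * D * exp (- r * s)"
    and lower: "- f' s \<le> - a * (- f s) + c * D * exp (- r * s)" if "0 \<le> s" for s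
    using bound[OF that] unfolding abs_le_iff by linarith+
  have "f t \<le> (\<bar>f 0\<bar> + c * D / (a - r)) * exp (- r * t)"
    by (rule exp_decay_of_deriv_le[OF deriv upper \<open>r < a\<close> \<open>0 \<le> c * D\<close> \<open>0 \<le> t\<close>])
  moreover have "- f t \<le> (\<bar>- f 0\<bar> + c * D / (a - r)) * exp (- r * t)"
    by (rule exp_decay_of_deriv_le[OF DERIV_minus[OF deriv] lower \<open>r < a\<close> \<open>0 \<le> c * D\<close> \<open>0 \<le> t\<close>])
  ultimately have "\<bar>f t\<bar> \<le> (\<bar>f 0\<bar> + c * D / (a - r)) * exp (- r * t)" by simp
  also have "\<dots> \<le> (D + c * D / (a - r)) * exp (- r * t)"
    using \<open>\<bar>f 0\<bar> \<le> D\<close> by (intro mult_right_mono) auto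
  finally show ?thesis by (simp add: algebra_simps)
qed

lemma tendsto_of_exp_decay_bound:
  fixes f :: "real \<Rightarrow> real"
  assumes "\<And>t. 0 \<le> t \<Longrightarrow> \<bar>f t - l\<bar> \<le> C * exp (- r * t)" and "0 < r"
  shows "(f \<longlongrightarrow> l) at_top"
proof -
  have "filterlim (\<lambda>t. - r * t) at_bot at_top"
    using \<open>0 < r\<close> by (intro filterlim_tendsto_neg_mult_at_bot[OF tendsto_const _ filterlim_ident]) auto
  then have "((\<lambda>t. C * exp (- r * t)) \<longlongrightarrow> 0) at_top"
    by (rule tendsto_mult_right_zero[OF filterlim_compose[OF exp_at_bot]])
  moreover have "eventually (\<lambda>t. norm (f t - l) \<le> C * exp (- r * t)) at_top"
    using assms(1) unfolding eventually_at_top_linorder by auto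
  ultimately have "((\<lambda>t. f t - l) \<longlongrightarrow> 0) at_top"
    by (rule Lim_null_comparison[rotated])
  then show ?thesis by (simp add: LIM_zero_iff)
qed

lemma first_negative_time:
  fixes x :: "'j \<Rightarrow> real \<Rightarrow> real"
  assumes cont: "\<And>j. j \<in> J \<Longrightarrow> continuous_on {0..} (x j)"
    and init: "\<And>j. j \<in> J \<Longrightarrow> 0 \<le> x j 0"
    and neg: "j0 \<in> J" "0 \<le> t0" "x j0 t0 < 0"
  obtains T where "0 \<le> T" "\<And>j. j \<in> J \<Longrightarrow> 0 \<le> x j T"
    "\<And>e. 0 < e \<Longrightarrow> \<exists>t\<in>{T..<T + e}. \<exists>j\<in>J. x j t < 0"
proof -
  define N where "N = {t. 0 \<le> t \<and> (\<exists>j\<in>J. x j t < 0)}"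
  define T where "T = Inf N"
  have "t0 \<in> N" using neg by (auto simp: N_def)
  have bdd: "bdd_below N" by (rule bdd_belowI[of _ 0]) (auto simp: N_def)
  have "0 \<le> T"
    unfolding T_def using \<open>t0 \<in> N\<close> by (intro cInf_greatest) (auto simp: N_def)
  have nonneg_before: "0 \<le> x j s" if "j \<in> J" "0 \<le> s" "s < T" for j s
  proof (rule ccontr)
    assume "\<not> 0 \<le> x j s"
    with that have "s \<in> N" unfolding N_def by (auto simp: not_le)
    then have "T \<le> s" unfolding T_def using bdd by (rule cInf_lower)
    with \<open>s < T\<close> show False by simp
  qed
  have "0 \<le> x j T" if "j \<in> J" for j
  proof (cases "T = 0")
    case False
    have "closed {s \<in> {0..T}. 0 \<le> x j s}"
      using cont[OF that] by (intro continuous_on_closed_Collect_le continuous_intros)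
        (auto intro: continuous_on_subset)
    moreover have "{0..<T} \<subseteq> {s \<in> {0..T}. 0 \<le> x j s}"
      using nonneg_before[OF that] by auto
    ultimately have "closure {0..<T} \<subseteq> {s \<in> {0..T}. 0 \<le> x j s}"
      by (rule closure_minimal[rotated])
    with False \<open>0 \<le> T\<close> show ?thesis by auto
  qed (use init that in simp)
  moreover have "\<exists>t\<in>{T..<T + e}. \<exists>j\<in>J. x j t < 0" if "0 < e" for e
  proof -
    have "\<not> T + e \<le> T" using \<open>0 < e\<close> by simp
    then obtain t where "t \<in> N" "t < T + e"
      unfolding T_def using \<open>t0 \<in> N\<close> by (metis cInf_greatest empty_iff not_le)
    moreover have "T \<le> t" unfolding T_def using \<open>t \<in> N\<close> bdd by (rule cInf_lower)
    ultimately show ?thesis by (auto simp: N_def)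
  qed
  ultimately show thesis using that \<open>0 \<le> T\<close> by blast
qed

text \<open>From the last zero before \<open>s\<close> on, \<open>f\<close> is negative, so only derivatives at negative
  values of \<open>f\<close> enter the mean value theorem.\<close>
lemma lower_bound_of_deriv_bound_where_negative:
  fixes f f' :: "real \<Rightarrow> real"
  assumes deriv: "\<And>t. 0 \<le> t \<Longrightarrow> (f has_real_derivative f' t) (at t within {0..})"
    and "0 \<le> T" "T \<le> s" "0 \<le> f T" "0 \<le> C"
    and bound: "\<And>\<xi>. T < \<xi> \<Longrightarrow> \<xi> < s \<Longrightarrow> f \<xi> < 0 \<Longrightarrow> - C \<le> f' \<xi>"
  shows "- C * (s - T) \<le> f s"
proof (cases "0 \<le> f s")
  case True
  moreover have "0 \<le> C * (s - T)" using assms by simp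
  ultimately show ?thesis by simp
next
  case False
  have cont: "continuous_on {0..} f"
    using deriv by (rule DERIV_continuous_on) simp
  define Z where "Z = {r \<in> {T..s}. 0 \<le> f r}"
  have "closed Z"
    unfolding Z_def using \<open>0 \<le> T\<close>
    by (intro continuous_on_closed_Collect_le continuous_intros continuous_on_subset[OF cont]) auto
  moreover have "T \<in> Z" "bdd_above Z" using assms by (auto simp: Z_def)
  ultimately have "Sup Z \<in> Z" by (intro closed_contains_Sup) auto
  define s0 where "s0 = Sup Z"
  have s0: "T \<le> s0" "s0 \<le> s" "0 \<le> f s0"
    using \<open>Sup Z \<in> Z\<close> by (auto simp: s0_def Z_def)
  with False have "s0 < s" by (cases "s0 = s") auto
  have negative: "f r < 0" if "s0 < r" "r \<le> s" for r
  proof (rule ccontr)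
    assume "\<not> f r < 0"
    with that s0 have "r \<in> Z" by (auto simp: Z_def)
    then have "r \<le> s0" unfolding s0_def using \<open>bdd_above Z\<close> by (rule cSup_upper)
    with that show False by simp
  qed
  obtain \<xi> where \<xi>: "s0 < \<xi>" "\<xi> < s" "f s - f s0 = f' \<xi> * (s - s0)"
    using mvt_on_nonneg_reals[OF deriv _ \<open>s0 < s\<close>] s0 \<open>0 \<le> T\<close> by auto
  have "- C \<le> f' \<xi>" using bound negative \<xi> s0 by simp
  then have "- C * (s - s0) \<le> f' \<xi> * (s - s0)"
    using \<open>s0 < s\<close> by (intro mult_right_mono) auto
  moreover have "- C * (s - T) \<le> - C * (s - s0)"
    using s0 \<open>0 \<le> C\<close> by (intro mult_left_mono_neg) auto
  ultimately show ?thesis using \<xi> s0 by linarith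
qed

lemma bounded_on_Icc_finite_family:
  fixes x :: "'j \<Rightarrow> real \<Rightarrow> real"
  assumes "finite J" and cont: "\<And>j. j \<in> J \<Longrightarrow> continuous_on {a..b} (x j)"
  obtains B where "0 \<le> B" "\<And>j s. j \<in> J \<Longrightarrow> s \<in> {a..b} \<Longrightarrow> \<bar>x j s\<bar> \<le> B"
proof -
  have "continuous_on {a..b} (\<lambda>s. \<Sum>j\<in>J. \<bar>x j s\<bar>)"
    by (intro continuous_intros cont)
  then have "bounded ((\<lambda>s. \<Sum>j\<in>J. \<bar>x j s\<bar>) ` {a..b})"
    by (intro compact_imp_bounded compact_continuous_image) auto
  then obtain B where B: "\<And>s. s \<in> {a..b} \<Longrightarrow> \<bar>\<Sum>j\<in>J. \<bar>x j s\<bar>\<bar> \<le> B"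
    unfolding bounded_real by blast
  have "\<bar>x j s\<bar> \<le> B" if "j \<in> J" "s \<in> {a..b}" for j s
    using member_le_sum[of j J "\<lambda>j. \<bar>x j s\<bar>"] B[OF that(2)] \<open>finite J\<close> that(1) by simp
  moreover have "0 \<le> B" if "j \<in> J" "s \<in> {a..b}" for j s
    using calculation[OF that] by simp
  ultimately show thesis
    using that[of "max 0 B"] by force
qed

text \<open>Shortly after a time at which all components are nonnegative, the total negative part
  can reach at most half of its own maximum, so it vanishes.\<close>
lemma quasi_positive_nonneg_after:
  fixes x x' :: "'j \<Rightarrow> real \<Rightarrow> real"
  assumes "finite J"
    and deriv: "\<And>j t. j \<in> J \<Longrightarrow> 0 \<le> t \<Longrightarrow> (x j has_real_derivative x' j t) (at t within {0..})"
    and quasi_pos: "\<And>B. 0 \<le> B \<Longrightarrow> \<exists>L\<ge>0. \<forall>t\<ge>0. \<forall>m\<ge>0. \<forall>j\<in>J.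
          (\<forall>i\<in>J. \<bar>x i t\<bar> \<le> B \<and> - m \<le> x i t) \<longrightarrow> x j t < 0 \<longrightarrow> - L * m \<le> x' j t"
    and "0 \<le> T" and nonneg_T: "\<And>j. j \<in> J \<Longrightarrow> 0 \<le> x j T"
  obtains \<delta> where "0 < \<delta>" "\<And>j s. j \<in> J \<Longrightarrow> s \<in> {T..T + \<delta>} \<Longrightarrow> 0 \<le> x j s"
proof -
  have cont: "continuous_on {T..T + e} (x j)" if "j \<in> J" for j e
    using \<open>0 \<le> T\<close>
    by (intro DERIV_continuous_on[of _ _ "x' j"] has_field_derivative_subset[OF deriv[OF that]]) auto
  obtain B where "0 \<le> B" and bounded: "\<And>j s. j \<in> J \<Longrightarrow> s \<in> {T..T + 1} \<Longrightarrow> \<bar>x j s\<bar> \<le> B"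
    using bounded_on_Icc_finite_family[where x = x, OF \<open>finite J\<close> cont] by blast
  obtain L where "0 \<le> L" and L: "\<And>t m j. 0 \<le> t \<Longrightarrow> 0 \<le> m \<Longrightarrow> j \<in> J \<Longrightarrow>
      (\<forall>i\<in>J. \<bar>x i t\<bar> \<le> B \<and> - m \<le> x i t) \<Longrightarrow> x j t < 0 \<Longrightarrow> - L * m \<le> x' j t"
    using quasi_pos[OF \<open>0 \<le> B\<close>] by blast
  define \<delta> where "\<delta> = 1 / (2 * (card J * L + 1))"
  have "0 \<le> card J * L" using \<open>0 \<le> L\<close> by simp
  then have "0 < \<delta>" "\<delta> \<le> 1" "card J * L * \<delta> \<le> 1 / 2"
    by (auto simp: \<delta>_def field_simps)
  define neg where "neg s = (\<Sum>j\<in>J. max 0 (- x j s))" for s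
  have "continuous_on {T..T + \<delta>} neg"
    unfolding neg_def by (intro continuous_intros cont)
  from continuous_attains_sup[OF compact_Icc _ this] \<open>0 < \<delta>\<close> obtain sM
    where "sM \<in> {T..T + \<delta>}" and sM: "\<forall>s\<in>{T..T + \<delta>}. neg s \<le> neg sM" by auto
  define M where "M = neg sM"
  have "0 \<le> M" by (simp add: M_def neg_def sum_nonneg)
  have small: "- (L * M * \<delta>) \<le> x j s" if "j \<in> J" "s \<in> {T..T + \<delta>}" for j s
  proof -
    have "- (L * M) * (s - T) \<le> x j s"
    proof (rule lower_bound_of_deriv_bound_where_negative[OF deriv[OF \<open>j \<in> J\<close>]])
      fix \<xi> assume "T < \<xi>" "\<xi> < s" "x j \<xi> < 0"
      with that \<open>\<delta> \<le> 1\<close> have "\<xi> \<in> {T..T + \<delta>}" "\<xi> \<in> {T..T + 1}" by auto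
      have "- M \<le> x i \<xi>" if "i \<in> J" for i
        using member_le_sum[of i J "\<lambda>i. max 0 (- x i \<xi>)"] sM \<open>\<xi> \<in> {T..T + \<delta>}\<close> \<open>finite J\<close> that
        by (force simp: M_def neg_def)
      with L[of \<xi> M j] bounded \<open>\<xi> \<in> {T..T + 1}\<close> \<open>0 \<le> T\<close> \<open>0 \<le> M\<close> \<open>j \<in> J\<close> \<open>x j \<xi> < 0\<close>
      show "- (L * M) \<le> x' j \<xi>" by force
    qed (use that \<open>0 \<le> T\<close> nonneg_T \<open>0 \<le> L\<close> \<open>0 \<le> M\<close> in auto)
    moreover have "L * M * (s - T) \<le> L * M * \<delta>"
      using that \<open>0 \<le> L\<close> \<open>0 \<le> M\<close> by (intro mult_left_mono) auto
    ultimately show ?thesis by simp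
  qed
  have "0 \<le> L * M * \<delta>" using \<open>0 \<le> L\<close> \<open>0 \<le> M\<close> \<open>0 < \<delta>\<close> by simp
  then have "neg sM \<le> (\<Sum>j\<in>J. L * M * \<delta>)"
    unfolding neg_def using small[OF _ \<open>sM \<in> {T..T + \<delta>}\<close>] by (intro sum_mono) force
  then have "M \<le> (card J * L * \<delta>) * M" by (simp add: M_def algebra_simps)
  also have "\<dots> \<le> 1 / 2 * M"
    using \<open>card J * L * \<delta> \<le> 1 / 2\<close> \<open>0 \<le> M\<close> by (rule mult_right_mono)
  finally have "M = 0" using \<open>0 \<le> M\<close> by simp
  with small \<open>0 < \<delta>\<close> that show thesis by simp
qed

lemma quasi_positive_invariance:
  fixes x x' :: "'j \<Rightarrow> real \<Rightarrow> real"
  assumes "finite J"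
    and deriv: "\<And>j t. j \<in> J \<Longrightarrow> 0 \<le> t \<Longrightarrow> (x j has_real_derivative x' j t) (at t within {0..})"
    and init: "\<And>j. j \<in> J \<Longrightarrow> 0 \<le> x j 0"
    and quasi_pos: "\<And>B. 0 \<le> B \<Longrightarrow> \<exists>L\<ge>0. \<forall>t\<ge>0. \<forall>m\<ge>0. \<forall>j\<in>J.
          (\<forall>i\<in>J. \<bar>x i t\<bar> \<le> B \<and> - m \<le> x i t) \<longrightarrow> x j t < 0 \<longrightarrow> - L * m \<le> x' j t"
    and "j \<in> J" "0 \<le> t"
  shows "0 \<le> x j t"
proof (rule ccontr)
  assume "\<not> 0 \<le> x j t"
  have cont: "continuous_on {0..} (x i)" if "i \<in> J" for i
    using deriv[OF that] by (rule DERIV_continuous_on) simp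
  obtain T where "0 \<le> T" and "\<And>i. i \<in> J \<Longrightarrow> 0 \<le> x i T"
    and negative_after: "\<And>e. 0 < e \<Longrightarrow> \<exists>s\<in>{T..<T + e}. \<exists>i\<in>J. x i s < 0"
    using first_negative_time[where J = J and x = x, OF cont init \<open>j \<in> J\<close> \<open>0 \<le> t\<close>]
      \<open>\<not> 0 \<le> x j t\<close> by auto
  then obtain \<delta> where "0 < \<delta>" and "\<And>i s. i \<in> J \<Longrightarrow> s \<in> {T..T + \<delta>} \<Longrightarrow> 0 \<le> x i s"
    using quasi_positive_nonneg_after[OF \<open>finite J\<close> deriv quasi_pos] by metis
  with negative_after[OF \<open>0 < \<delta>\<close>] show False by fastforce
qed

lemma mult_ge_neg_bound:
  fixes a b \<alpha> \<beta> A B :: real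
  assumes "- \<alpha> \<le> a" "\<bar>a\<bar> \<le> A" "- \<beta> \<le> b" "\<bar>b\<bar> \<le> B" "0 \<le> \<alpha>" "0 \<le> \<beta>"
  shows "- (\<alpha> * B + \<beta> * A) \<le> a * b"
proof -
  have "0 \<le> \<alpha> * B" "0 \<le> \<beta> * A" using assms by (auto intro: order_trans[OF abs_ge_zero])
  consider "0 \<le> a" "0 \<le> b" | "a < 0" "0 \<le> b" | "0 \<le> a" "b < 0" | "a < 0" "b < 0"
    by linarith
  then show ?thesis
  proof cases
    case 2
    have "- \<alpha> * B \<le> - \<alpha> * b" using assms 2 by (intro mult_left_mono_neg) auto
    also have "\<dots> \<le> a * b" using assms 2 by (intro mult_right_mono) auto
    finally show ?thesis using \<open>0 \<le> \<beta> * A\<close> by simp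
  next
    case 3
    have "- \<beta> * A \<le> - \<beta> * a" using assms 3 by (intro mult_left_mono_neg) auto
    also have "\<dots> = a * (- \<beta>)" by simp
    also have "\<dots> \<le> a * b" using assms 3 by (intro mult_left_mono) auto
    finally show ?thesis using \<open>0 \<le> \<alpha> * B\<close> by simp
  qed (smt (verit) \<open>0 \<le> \<alpha> * B\<close> \<open>0 \<le> \<beta> * A\<close> mult_nonneg_nonneg mult_nonpos_nonpos)+
qed

lemma mult_le_one_ge_neg:
  fixes c y z :: real
  assumes "- z \<le> y" "0 \<le> z" "0 \<le> c" "c \<le> 1"
  shows "- z \<le> c * y"
proof (cases "0 \<le> y")
  case True
  with assms have "0 \<le> c * y" by simp
  with assms show ?thesis by linarith
next
  case False
  then have "y \<le> c * y" using assms by (simp add: mult_le_cancel_right1)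
  with assms show ?thesis by simp
qed

lemma Lam_eq_d_Nstar:
  assumes "0 < d" "0 \<le> b * real k * Phi"
  shows "Lam b d Phi k = d * Nstar b d Phi k"
  using assms by (simp add: Lam_def Nstar_def field_simps)

datatype compartment = Sc | Vc | Ic | Qc

lemma UNIV_compartment: "UNIV = {Sc, Vc, Ic, Qc}"
  using compartment.exhaust by auto

locale sviqs_params =
  fixes n :: nat and p :: "nat \<Rightarrow> real" and b d Phi :: real
    and lam phi mu :: "nat \<Rightarrow> real" and beta gamma eta omega dlt :: real
  assumes n_pos: "1 \<le> n" and p_pos: "\<And>k. k \<in> {1..n} \<Longrightarrow> 0 < p k"
    and b_pos: "0 < b" and d_pos: "0 < d" and Phi_pos: "0 < Phi"
    and lam_pos: "\<And>k. k \<in> {1..n} \<Longrightarrow> 0 < lam k"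
    and phi_pos: "\<And>k. k \<in> {1..n} \<Longrightarrow> 0 < phi k"
    and mu_pos: "\<And>k. k \<in> {1..n} \<Longrightarrow> 0 < mu k"
    and beta_pos: "0 < beta" and gamma_pos: "0 < gamma" and eta_pos: "0 < eta"
    and omega_pos: "0 < omega" and dlt_nonneg: "0 \<le> dlt" and dlt_le_1: "dlt \<le> 1"
begin

abbreviation "Ntot \<equiv> Nstar b d Phi"
abbreviation "Sdf \<equiv> S0 b d Phi mu omega"
abbreviation "Vdf \<equiv> V0 b d Phi mu omega"
abbreviation "R0 \<equiv> R0_tilde n p b d Phi lam phi beta gamma"

definition exit_rate :: real where "exit_rate = gamma + beta + d"

definition Theta_coeff :: real where
  "Theta_coeff = (\<Sum>i=1..n. phi i * p i) / mean_deg n p"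

definition initial_deviation :: "(nat \<Rightarrow> real \<Rightarrow> real) \<Rightarrow> (nat \<Rightarrow> real \<Rightarrow> real) \<Rightarrow>
    (nat \<Rightarrow> real \<Rightarrow> real) \<Rightarrow> real" where
  "initial_deviation V I Q = (\<Sum>i=1..n. \<bar>I i 0\<bar> + \<bar>Q i 0\<bar> + \<bar>V i 0 - Vdf i\<bar>)"

lemma mean_deg_pos: "0 < mean_deg n p"
  unfolding mean_deg_def using n_pos p_pos by (intro sum_pos) auto

lemma Theta_coeff_nonneg: "0 \<le> Theta_coeff"
  unfolding Theta_coeff_def using mean_deg_pos phi_pos p_pos
  by (intro divide_nonneg_pos sum_nonneg) (auto intro: less_imp_le)

lemma exit_rate_pos: "0 < exit_rate"
  unfolding exit_rate_def using gamma_pos beta_pos d_pos by simp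

lemma Ntot_pos: "k \<in> {1..n} \<Longrightarrow> 0 < Ntot k"
  unfolding Nstar_def using b_pos d_pos Phi_pos by (auto intro!: divide_pos_pos add_pos_pos)

lemma Lam_eq: "Lam b d Phi k = d * Ntot k"
  using b_pos d_pos Phi_pos by (intro Lam_eq_d_Nstar) auto

lemma Sdf_plus_Vdf:
  assumes "k \<in> {1..n}"
  shows "Sdf k + Vdf k = Ntot k"
proof -
  have "Sdf k + Vdf k = (mu k + omega + d) * Ntot k / (mu k + omega + d)"
    unfolding S0_def V0_def add_divide_distrib[symmetric] by (simp add: algebra_simps)
  also have "\<dots> = Ntot k" using mu_pos[OF assms] omega_pos d_pos by simp
  finally show ?thesis .
qed

lemma Vdf_eq: "k \<in> {1..n} \<Longrightarrow> (mu k + d + omega) * Vdf k = mu k * Ntot k"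
  using mu_pos[of k] omega_pos d_pos by (simp add: V0_def field_simps)

lemma initial_deviation_lt:
  fixes \<delta> :: real
  assumes "\<forall>k\<in>{1..n}. \<bar>V k 0 - Vdf k\<bar> < \<delta> \<and> \<bar>I k 0\<bar> < \<delta> \<and> \<bar>Q k 0\<bar> < \<delta>"
  shows "initial_deviation V I Q < 3 * real n * \<delta>"
proof -
  have "initial_deviation V I Q < (\<Sum>i=1..n. 3 * \<delta>)"
    unfolding initial_deviation_def
  proof (rule sum_strict_mono)
    fix i assume "i \<in> {1..n}"
    with assms show "\<bar>I i 0\<bar> + \<bar>Q i 0\<bar> + \<bar>V i 0 - Vdf i\<bar> < 3 * \<delta>" by fastforce
  qed (use n_pos in auto)
  then show ?thesis by simp
qed

lemma Theta_le:
  assumes "\<And>i. i \<in> {1..n} \<Longrightarrow> J i t \<le> a"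
  shows "Theta n p phi J t \<le> Theta_coeff * a"
proof -
  have "(\<Sum>i=1..n. phi i * p i * J i t) \<le> (\<Sum>i=1..n. phi i * p i * a)"
    using assms phi_pos p_pos by (intro sum_mono mult_left_mono) (auto intro: less_imp_le)
  then show ?thesis using mean_deg_pos
    by (simp add: Theta_def Theta_coeff_def sum_distrib_right divide_right_mono)
qed

lemma Theta_ge:
  assumes "\<And>i. i \<in> {1..n} \<Longrightarrow> a \<le> J i t"
  shows "Theta_coeff * a \<le> Theta n p phi J t"
proof -
  have "(\<Sum>i=1..n. phi i * p i * a) \<le> (\<Sum>i=1..n. phi i * p i * J i t)"
    using assms phi_pos p_pos by (intro sum_mono mult_left_mono) (auto intro: less_imp_le)
  then show ?thesis using mean_deg_pos
    by (simp add: Theta_def Theta_coeff_def sum_distrib_right divide_right_mono)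
qed

lemma infection_gain_eq:
  "(\<Sum>i=1..n. phi i * p i * lam i * Ntot i) / mean_deg n p = exit_rate * R0"
proof -
  have "(\<Sum>i=1..n. lam i * phi i * p i * Lam b d Phi i / (d * (gamma + beta + d)))
      = (\<Sum>i=1..n. phi i * p i * lam i * Ntot i) / exit_rate"
    unfolding sum_divide_distrib exit_rate_def using d_pos
    by (intro sum.cong) (simp_all add: Lam_eq)
  then show ?thesis using exit_rate_pos by (simp add: R0_tilde_def)
qed

end

locale sviqs_trajectory = sviqs_params +
  fixes S V I Q :: "nat \<Rightarrow> real \<Rightarrow> real"
  assumes solution: "sviqs_solution n p b d Phi lam phi mu beta gamma eta omega dlt S V I Q"
    and feasible: "feasible_init n b d Phi S V I Q"
begin

abbreviation "Th \<equiv> Theta n p phi I"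

definition S_rhs :: "nat \<Rightarrow> real \<Rightarrow> real" where "S_rhs k t = Lam b d Phi k - lam k * S k t * Th t + gamma * I k t + eta * Q k t
  + omega * V k t - (mu k + d) * S k t"
definition V_rhs :: "nat \<Rightarrow> real \<Rightarrow> real" where "V_rhs k t = mu k * S k t - dlt * lam k * V k t * Th t - (d + omega) * V k t"
definition I_rhs :: "nat \<Rightarrow> real \<Rightarrow> real" where "I_rhs k t = lam k * S k t * Th t + dlt * lam k * V k t * Th t - exit_rate * I k t"
definition Q_rhs :: "nat \<Rightarrow> real \<Rightarrow> real" where "Q_rhs k t = beta * I k t - (eta + d) * Q k t"

lemma
  assumes "k \<in> {1..n}" "0 \<le> t"
  shows S_deriv: "(S k has_real_derivative S_rhs k t) (at t within {0..})"
    and V_deriv: "(V k has_real_derivative V_rhs k t) (at t within {0..})"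
    and I_deriv: "(I k has_real_derivative I_rhs k t) (at t within {0..})"
    and Q_deriv: "(Q k has_real_derivative Q_rhs k t) (at t within {0..})"
  using solution assms
  by (simp_all add: sviqs_solution_def S_rhs_def V_rhs_def I_rhs_def Q_rhs_def exit_rate_def)

lemma
  assumes "k \<in> {1..n}"
  shows S_init_nonneg: "0 \<le> S k 0" and V_init_nonneg: "0 \<le> V k 0"
    and I_init_nonneg: "0 \<le> I k 0" and Q_init_nonneg: "0 \<le> Q k 0"
    and population_init: "S k 0 + V k 0 + I k 0 + Q k 0 = Ntot k"
  using feasible assms by (simp_all add: feasible_init_def)

definition quasi_pos_rate :: "real \<Rightarrow> nat \<Rightarrow> real" where
  "quasi_pos_rate B k = gamma + eta + omega + beta + mu k + 4 * lam k * Theta_coeff * B"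

lemma incidence_lower_bounds:
  assumes "k \<in> {1..n}" "0 \<le> m" "\<bar>S k t\<bar> \<le> B" "\<bar>V k t\<bar> \<le> B" "- m \<le> S k t" "- m \<le> V k t"
    and "- (Theta_coeff * m) \<le> Th t" "\<bar>Th t\<bar> \<le> Theta_coeff * B"
  defines "c \<equiv> lam k * (Theta_coeff * B * m)"
  shows "S k t < 0 \<Longrightarrow> - c \<le> - (lam k * S k t * Th t)"
    and "V k t < 0 \<Longrightarrow> - c \<le> - (dlt * lam k * V k t * Th t)"
    and "- (2 * c) \<le> lam k * S k t * Th t"
    and "- (2 * c) \<le> dlt * lam k * V k t * Th t"
proof -
  have lam: "0 \<le> lam k" using lam_pos assms(1) by (auto intro: less_imp_le)
  have "0 \<le> c" unfolding c_def using Theta_coeff_nonneg lam assms(2,3) by simp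
  have scaled: "- (lam k * z) \<le> lam k * y" if "- z \<le> y" for y z
    using mult_left_mono[OF that lam] by simp
  have "- (Theta_coeff * B * m) \<le> - S k t * Th t" if "S k t < 0"
    using mult_ge_neg_bound[of 0 "- S k t" B "Theta_coeff * m" "Th t" "Theta_coeff * B"]
      assms that Theta_coeff_nonneg by (simp add: algebra_simps)
  from scaled[OF this] show "S k t < 0 \<Longrightarrow> - c \<le> - (lam k * S k t * Th t)"
    by (simp add: c_def algebra_simps)
  have "- (Theta_coeff * B * m) \<le> - V k t * Th t" if "V k t < 0"
    using mult_ge_neg_bound[of 0 "- V k t" B "Theta_coeff * m" "Th t" "Theta_coeff * B"]
      assms that Theta_coeff_nonneg by (simp add: algebra_simps)
  from mult_le_one_ge_neg[OF scaled[OF this] _ dlt_nonneg dlt_le_1] \<open>0 \<le> c\<close>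
  show "V k t < 0 \<Longrightarrow> - c \<le> - (dlt * lam k * V k t * Th t)"
    by (simp add: c_def algebra_simps)
  have "- (2 * (Theta_coeff * B * m)) \<le> S k t * Th t" "- (2 * (Theta_coeff * B * m)) \<le> V k t * Th t"
    using mult_ge_neg_bound[of m "S k t" B "Theta_coeff * m" "Th t" "Theta_coeff * B"]
      mult_ge_neg_bound[of m "V k t" B "Theta_coeff * m" "Th t" "Theta_coeff * B"]
      assms Theta_coeff_nonneg by (simp_all add: algebra_simps)
  from scaled[OF this(1)] mult_le_one_ge_neg[OF scaled[OF this(2)] _ dlt_nonneg dlt_le_1] \<open>0 \<le> c\<close>
  show "- (2 * c) \<le> lam k * S k t * Th t" "- (2 * c) \<le> dlt * lam k * V k t * Th t"
    by (simp_all add: c_def algebra_simps)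
qed

lemma rhs_lower_bounds:
  assumes "k \<in> {1..n}" "0 \<le> m" "\<bar>S k t\<bar> \<le> B" "\<bar>V k t\<bar> \<le> B"
    and "- m \<le> S k t" "- m \<le> V k t" "- m \<le> I k t" "- m \<le> Q k t"
    and "- (Theta_coeff * m) \<le> Th t" "\<bar>Th t\<bar> \<le> Theta_coeff * B"
  shows "S k t < 0 \<Longrightarrow> - (quasi_pos_rate B k * m) \<le> S_rhs k t"
    and "V k t < 0 \<Longrightarrow> - (quasi_pos_rate B k * m) \<le> V_rhs k t"
    and "I k t < 0 \<Longrightarrow> - (quasi_pos_rate B k * m) \<le> I_rhs k t"
    and "Q k t < 0 \<Longrightarrow> - (quasi_pos_rate B k * m) \<le> Q_rhs k t"
proof -
  have mu: "0 \<le> mu k" using mu_pos assms(1) by (auto intro: less_imp_le)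
  have scaled: "- (a * m) \<le> a * y" if "0 \<le> a" "- m \<le> y" for a y :: real
    using mult_left_mono[OF that(2) that(1)] by simp
  define c where "c = lam k * (Theta_coeff * B * m)"
  have "0 \<le> c"
    unfolding c_def using lam_pos[OF assms(1)] Theta_coeff_nonneg assms(2,3) by simp
  have rate: "quasi_pos_rate B k * m
      = gamma * m + eta * m + omega * m + beta * m + mu k * m + 4 * c"
    by (simp add: quasi_pos_rate_def c_def algebra_simps)
  have "0 \<le> gamma * m" "0 \<le> eta * m" "0 \<le> omega * m" "0 \<le> beta * m" "0 \<le> mu k * m"
    using gamma_pos eta_pos omega_pos beta_pos mu assms(2) by simp_all
  moreover have "- (gamma * m) \<le> gamma * I k t" "- (eta * m) \<le> eta * Q k t"
    "- (omega * m) \<le> omega * V k t" "- (mu k * m) \<le> mu k * S k t" "- (beta * m) \<le> beta * I k t"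
    using scaled assms(5-8) gamma_pos eta_pos omega_pos mu beta_pos by auto
  moreover have "0 \<le> Lam b d Phi k"
    using Lam_eq Ntot_pos[OF assms(1)] d_pos by simp
  moreover have "S k t < 0 \<Longrightarrow> 0 \<le> - ((mu k + d) * S k t)"
    "V k t < 0 \<Longrightarrow> 0 \<le> - ((d + omega) * V k t)"
    "I k t < 0 \<Longrightarrow> 0 \<le> - (exit_rate * I k t)"
    "Q k t < 0 \<Longrightarrow> 0 \<le> - ((eta + d) * Q k t)"
    using mu d_pos omega_pos eta_pos exit_rate_pos by (auto intro!: mult_nonneg_nonpos)
  ultimately show "S k t < 0 \<Longrightarrow> - (quasi_pos_rate B k * m) \<le> S_rhs k t"
    and "V k t < 0 \<Longrightarrow> - (quasi_pos_rate B k * m) \<le> V_rhs k t"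
    and "I k t < 0 \<Longrightarrow> - (quasi_pos_rate B k * m) \<le> I_rhs k t"
    and "Q k t < 0 \<Longrightarrow> - (quasi_pos_rate B k * m) \<le> Q_rhs k t"
    unfolding S_rhs_def V_rhs_def I_rhs_def Q_rhs_def rate
    using incidence_lower_bounds[OF assms(1-6,9,10)] \<open>0 \<le> c\<close> unfolding c_def[symmetric]
    by linarith+
qed

lemma quasi_pos_rate_nonneg: "k \<in> {1..n} \<Longrightarrow> 0 \<le> B \<Longrightarrow> 0 \<le> quasi_pos_rate B k"
  unfolding quasi_pos_rate_def using gamma_pos eta_pos omega_pos beta_pos mu_pos[of k]
    lam_pos[of k] Theta_coeff_nonneg by simp

text \<open>The whole solution as one family of scalar functions indexed by degree class and
  compartment, the form in which quasi-positive invariance applies.\<close>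
definition state :: "nat \<times> compartment \<Rightarrow> real \<Rightarrow> real" where
  "state = (\<lambda>(k, c). case c of Sc \<Rightarrow> S k | Vc \<Rightarrow> V k | Ic \<Rightarrow> I k | Qc \<Rightarrow> Q k)"

definition state_rhs :: "nat \<times> compartment \<Rightarrow> real \<Rightarrow> real" where
  "state_rhs = (\<lambda>(k, c). case c of Sc \<Rightarrow> S_rhs k | Vc \<Rightarrow> V_rhs k | Ic \<Rightarrow> I_rhs k | Qc \<Rightarrow> Q_rhs k)"

lemma state_quasi_positive:
  assumes "0 \<le> B"
  shows "\<exists>L\<ge>0. \<forall>t\<ge>0. \<forall>m\<ge>0. \<forall>j\<in>{1..n} \<times> UNIV.
    (\<forall>i\<in>{1..n} \<times> UNIV. \<bar>state i t\<bar> \<le> B \<and> - m \<le> state i t) \<longrightarrow>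
      state j t < 0 \<longrightarrow> - L * m \<le> state_rhs j t"
proof (intro exI[of _ "\<Sum>k=1..n. quasi_pos_rate B k"] conjI allI impI ballI)
  show "0 \<le> (\<Sum>k=1..n. quasi_pos_rate B k)"
    using assms by (intro sum_nonneg quasi_pos_rate_nonneg) auto
  fix t m :: real and j :: "nat \<times> compartment"
  assume "0 \<le> m" and j: "j \<in> {1..n} \<times> UNIV"
    and bounds: "\<forall>i\<in>{1..n} \<times> UNIV. \<bar>state i t\<bar> \<le> B \<and> - m \<le> state i t"
    and negative: "state j t < 0"
  obtain k c where jkc: "j = (k, c)" and k: "k \<in> {1..n}" using j by auto
  have class_bounds: "\<bar>S i t\<bar> \<le> B \<and> - m \<le> S i t" "\<bar>V i t\<bar> \<le> B \<and> - m \<le> V i t"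
    "\<bar>I i t\<bar> \<le> B \<and> - m \<le> I i t" "\<bar>Q i t\<bar> \<le> B \<and> - m \<le> Q i t" if "i \<in> {1..n}" for i
  proof -
    have "\<bar>state (i, c) t\<bar> \<le> B \<and> - m \<le> state (i, c) t" for c using bounds that by auto
    from this[of Sc] this[of Vc] this[of Ic] this[of Qc] show
      "\<bar>S i t\<bar> \<le> B \<and> - m \<le> S i t" "\<bar>V i t\<bar> \<le> B \<and> - m \<le> V i t"
      "\<bar>I i t\<bar> \<le> B \<and> - m \<le> I i t" "\<bar>Q i t\<bar> \<le> B \<and> - m \<le> Q i t"
      by (simp_all add: state_def)
  qed
  have "Theta_coeff * (- m) \<le> Th t" "Theta_coeff * (- B) \<le> Th t" "Th t \<le> Theta_coeff * B"
    by (rule Theta_ge Theta_le; use class_bounds(3) in \<open>force simp: abs_le_iff\<close>)+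
  then have "- (Theta_coeff * m) \<le> Th t" "\<bar>Th t\<bar> \<le> Theta_coeff * B" by (simp_all add: abs_le_iff)
  with rhs_lower_bounds[OF k \<open>0 \<le> m\<close>] class_bounds[OF k]
  have "- (quasi_pos_rate B k * m) \<le> state_rhs j t"
    using negative by (cases c) (simp_all add: jkc state_def state_rhs_def)
  moreover have "quasi_pos_rate B k \<le> (\<Sum>k=1..n. quasi_pos_rate B k)"
    using k quasi_pos_rate_nonneg assms by (intro member_le_sum) auto
  then have "- (\<Sum>k=1..n. quasi_pos_rate B k) * m \<le> - (quasi_pos_rate B k * m)"
    using \<open>0 \<le> m\<close> by (simp add: mult_right_mono)
  ultimately show "- (\<Sum>k=1..n. quasi_pos_rate B k) * m \<le> state_rhs j t" by linarith
qed

lemma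
  assumes "k \<in> {1..n}" "0 \<le> t"
  shows S_nonneg: "0 \<le> S k t" and V_nonneg: "0 \<le> V k t"
    and I_nonneg: "0 \<le> I k t" and Q_nonneg: "0 \<le> Q k t"
proof -
  have "0 \<le> state (k, c) t" for c
  proof (rule quasi_positive_invariance[where J = "{1..n} \<times> UNIV" and x = state and x' = state_rhs
        and j = "(k, c)" and t = t])
    show "finite ({1..n} \<times> (UNIV :: compartment set))"
      by (simp add: UNIV_compartment)
    show "(state j has_real_derivative state_rhs j s) (at s within {0..})"
      if "j \<in> {1..n} \<times> UNIV" "0 \<le> s" for j s
      using that S_deriv V_deriv I_deriv Q_deriv
      by (cases j; cases "snd j") (auto simp: state_def state_rhs_def)
    show "0 \<le> state j 0" if "j \<in> {1..n} \<times> UNIV" for j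
      using that S_init_nonneg V_init_nonneg I_init_nonneg Q_init_nonneg
      by (cases j; cases "snd j") (auto simp: state_def)
  qed (use assms state_quasi_positive in auto)
  from this[of Sc] this[of Vc] this[of Ic] this[of Qc]
  show "0 \<le> S k t" "0 \<le> V k t" "0 \<le> I k t" "0 \<le> Q k t" by (simp_all add: state_def)
qed

lemma population_const:
  assumes k: "k \<in> {1..n}" and "0 \<le> t"
  shows "S k t + V k t + I k t + Q k t = Ntot k"
proof -
  define f where "f s = S k s + V k s + I k s + Q k s - Ntot k" for s
  have deriv: "(f has_real_derivative S_rhs k s + V_rhs k s + I_rhs k s + Q_rhs k s) (at s within {0..})"
    if "0 \<le> s" for s
    unfolding f_def using S_deriv[OF k that] V_deriv[OF k that] I_deriv[OF k that] Q_deriv[OF k that]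
    by (auto intro!: derivative_eq_intros)
  have "S_rhs k s + V_rhs k s + I_rhs k s + Q_rhs k s + d * f s = 0" for s
    by (simp add: f_def S_rhs_def V_rhs_def I_rhs_def Q_rhs_def exit_rate_def Lam_eq algebra_simps)
  then have "\<bar>f t\<bar> \<le> (1 + 0 / (d - d / 2)) * 0 * exp (- (d / 2) * t)"
    using d_pos population_init[OF k] \<open>0 \<le> t\<close>
    by (intro abs_le_exp_decay[OF deriv]) (simp_all add: f_def)
  then show ?thesis by (simp add: f_def)
qed

lemma Theta_nonneg: "0 \<le> t \<Longrightarrow> 0 \<le> Th t"
  using Theta_ge[where J = I and a = 0 and t = t] I_nonneg by simp

lemma infected_inflow_le: "k \<in> {1..n} \<Longrightarrow> 0 \<le> t \<Longrightarrow> S k t + dlt * V k t \<le> Ntot k"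
  using population_const[of k t] mult_right_mono[OF dlt_le_1 V_nonneg[of k t]]
    I_nonneg[of k t] Q_nonneg[of k t] by simp

definition Theta_rhs :: "real \<Rightarrow> real" where
  "Theta_rhs t = (\<Sum>i=1..n. phi i * p i * I_rhs i t) / mean_deg n p"

lemma Theta_deriv:
  assumes "0 \<le> t"
  shows "(Th has_real_derivative Theta_rhs t) (at t within {0..})"
proof -
  have "Th = (\<lambda>t. (\<Sum>i=1..n. phi i * p i * I i t) / mean_deg n p)"
    by (simp add: Theta_def fun_eq_iff)
  then show ?thesis
    unfolding Theta_rhs_def using I_deriv assms
    by (auto intro!: DERIV_cdivide DERIV_sum DERIV_cmult)
qed

text \<open>Since \<open>S + \<delta> V \<le> N\<^sup>*\<close>, the threshold quantity \<open>R0\<close> bounds the per-capita growth of the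
  force of infection.\<close>
lemma Theta_rhs_le:
  assumes "0 \<le> t"
  shows "Theta_rhs t \<le> - (exit_rate * (1 - R0)) * Th t"
proof -
  have "(\<Sum>i=1..n. phi i * p i * I_rhs i t)
      = Th t * (\<Sum>i=1..n. phi i * p i * lam i * (S i t + dlt * V i t))
        - exit_rate * (\<Sum>i=1..n. phi i * p i * I i t)"
    by (simp add: I_rhs_def sum_distrib_left sum_subtractf[symmetric] algebra_simps)
  also have "\<dots> \<le> Th t * (\<Sum>i=1..n. phi i * p i * lam i * Ntot i)
        - exit_rate * (\<Sum>i=1..n. phi i * p i * I i t)"
    using Theta_nonneg[OF assms] infected_inflow_le assms phi_pos p_pos lam_pos
    by (intro diff_right_mono mult_left_mono sum_mono) (auto intro!: mult_nonneg_nonneg less_imp_le)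
  finally have "Theta_rhs t \<le> (Th t * (\<Sum>i=1..n. phi i * p i * lam i * Ntot i)
        - exit_rate * (\<Sum>i=1..n. phi i * p i * I i t)) / mean_deg n p"
    unfolding Theta_rhs_def using mean_deg_pos by (simp add: divide_right_mono)
  also have "\<dots> = Th t * (exit_rate * R0) - exit_rate * Th t"
    by (simp add: infection_gain_eq[symmetric] Theta_def diff_divide_distrib)
  finally show ?thesis by (simp add: algebra_simps)
qed

end

locale sviqs_subthreshold = sviqs_params +
  assumes R0_lt_1: "R0 < 1"
begin

lemma R0_nonneg: "0 \<le> R0"
proof -
  have "0 \<le> (\<Sum>i=1..n. phi i * p i * lam i * Ntot i) / mean_deg n p"
    using mean_deg_pos phi_pos p_pos lam_pos Ntot_pos
    by (intro divide_nonneg_pos sum_nonneg) (auto intro!: mult_nonneg_nonneg less_imp_le)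
  then have "0 \<le> exit_rate * R0" by (simp only: infection_gain_eq)
  then show ?thesis using exit_rate_pos by (simp add: zero_le_mult_iff)
qed

text \<open>A common rate strictly below the decay rates of \<open>\<Theta>\<close> (\<open>exit_rate (1 - R0)\<close>), of \<open>I\<close>
  (\<open>exit_rate\<close>), of \<open>Q\<close> (\<open>\<eta> + d\<close>) and of \<open>V\<close> (\<open>\<mu>\<^sub>k + d + \<omega>\<close>).\<close>
definition decay_rate :: real where
  "decay_rate = min (exit_rate * (1 - R0) / 2) (min ((eta + d) / 2) ((d + omega) / 2))"

lemma decay_rate_pos: "0 < decay_rate"
  using exit_rate_pos R0_lt_1 eta_pos d_pos omega_pos by (simp add: decay_rate_def)

lemma decay_rate_lt:
  shows "decay_rate < exit_rate * (1 - R0)" "decay_rate < exit_rate" "decay_rate < eta + d"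
    and "k \<in> {1..n} \<Longrightarrow> decay_rate < mu k + d + omega"
proof -
  have "0 < exit_rate * (1 - R0)" using exit_rate_pos R0_lt_1 by simp
  moreover have "exit_rate * (1 - R0) \<le> exit_rate"
    using exit_rate_pos R0_nonneg by (simp add: mult_left_le)
  ultimately show "decay_rate < exit_rate * (1 - R0)" "decay_rate < exit_rate"
    unfolding decay_rate_def by linarith+
  show "decay_rate < eta + d" using eta_pos d_pos by (auto simp: decay_rate_def min_def)
  show "decay_rate < mu k + d + omega" if "k \<in> {1..n}"
    using mu_pos[OF that] omega_pos d_pos by (auto simp: decay_rate_def min_def)
qed

text \<open>The constants produced by the cascade \<open>\<Theta> \<rightarrow> I \<rightarrow> Q \<rightarrow> V\<close> of comparison estimates.\<close>
definition I_coeff :: "nat \<Rightarrow> real" where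
  "I_coeff k = 1 + lam k * Ntot k * Theta_coeff / (exit_rate - decay_rate)"

definition Q_coeff :: "nat \<Rightarrow> real" where
  "Q_coeff k = 1 + beta * I_coeff k / (eta + d - decay_rate)"

definition V_coeff :: "nat \<Rightarrow> real" where
  "V_coeff k = 1 + (mu k * (I_coeff k + Q_coeff k) + lam k * Ntot k * Theta_coeff)
    / (mu k + d + omega - decay_rate)"

definition deviation_coeff :: real where
  "deviation_coeff = (\<Sum>k=1..n. V_coeff k + I_coeff k + Q_coeff k)"

lemma coeffs_ge_1:
  assumes "k \<in> {1..n}"
  shows "1 \<le> I_coeff k" "1 \<le> Q_coeff k" "1 \<le> V_coeff k"
proof -
  have pos: "0 \<le> lam k * Ntot k * Theta_coeff" "0 < mu k"
    using lam_pos[OF assms] Ntot_pos[OF assms] mu_pos[OF assms] Theta_coeff_nonneg by simp_all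
  then show "1 \<le> I_coeff k"
    using decay_rate_lt by (simp add: I_coeff_def)
  then show "1 \<le> Q_coeff k"
    using decay_rate_lt beta_pos by (simp add: Q_coeff_def)
  with \<open>1 \<le> I_coeff k\<close> pos show "1 \<le> V_coeff k"
    using decay_rate_lt(4)[OF assms] by (simp add: V_coeff_def)
qed

lemma coeffs_le_deviation_coeff:
  assumes "k \<in> {1..n}"
  shows "V_coeff k + I_coeff k + Q_coeff k \<le> deviation_coeff"
proof -
  have "0 \<le> V_coeff i + I_coeff i + Q_coeff i" if "i \<in> {1..n}" for i
    using coeffs_ge_1[OF that] by linarith
  then show ?thesis unfolding deviation_coeff_def using assms by (intro member_le_sum) auto
qed

lemma deviation_coeff_nonneg: "0 \<le> deviation_coeff"
  using coeffs_le_deviation_coeff[of 1] coeffs_ge_1[of 1] n_pos by force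

end

locale sviqs_subthreshold_trajectory = sviqs_subthreshold + sviqs_trajectory
begin

abbreviation "D0 \<equiv> initial_deviation V I Q"

lemma initial_deviation_ge:
  assumes "k \<in> {1..n}"
  shows "\<bar>I k 0\<bar> \<le> D0" "\<bar>Q k 0\<bar> \<le> D0" "\<bar>V k 0 - Vdf k\<bar> \<le> D0"
proof -
  have "\<bar>I k 0\<bar> + \<bar>Q k 0\<bar> + \<bar>V k 0 - Vdf k\<bar> \<le> D0"
    unfolding initial_deviation_def using assms by (intro member_le_sum) auto
  then show "\<bar>I k 0\<bar> \<le> D0" "\<bar>Q k 0\<bar> \<le> D0" "\<bar>V k 0 - Vdf k\<bar> \<le> D0" by simp_all
qed

lemma Theta_bound:
  assumes "0 \<le> t"
  shows "Th t \<le> Theta_coeff * D0 * exp (- decay_rate * t)"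
proof -
  have "Th 0 \<le> Theta_coeff * D0"
    by (rule Theta_le) (use initial_deviation_ge(1) in \<open>simp add: abs_le_iff\<close>)
  then have "\<bar>Th 0\<bar> * exp (- decay_rate * t) \<le> Theta_coeff * D0 * exp (- decay_rate * t)"
    using Theta_nonneg[of 0] by (intro mult_right_mono) auto
  moreover have "Th t \<le> \<bar>Th 0\<bar> * exp (- decay_rate * t)"
    using exp_decay_of_deriv_le[where f' = Theta_rhs and C = 0 and a = "exit_rate * (1 - R0)",
        OF Theta_deriv _ decay_rate_lt(1) _ assms] Theta_rhs_le by simp
  ultimately show ?thesis by linarith
qed

lemma I_bound:
  assumes k: "k \<in> {1..n}" and "0 \<le> t"
  shows "\<bar>I k t\<bar> \<le> I_coeff k * D0 * exp (- decay_rate * t)"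
  unfolding I_coeff_def
proof (rule abs_le_exp_decay[OF I_deriv[OF k]])
  fix s :: real assume "0 \<le> s"
  have "lam k * (S k s + dlt * V k s) * Th s \<le> lam k * Ntot k * Th s"
    using lam_pos[OF k] infected_inflow_le[OF k \<open>0 \<le> s\<close>] Theta_nonneg[OF \<open>0 \<le> s\<close>]
    by (intro mult_right_mono mult_left_mono) auto
  also have "\<dots> \<le> lam k * Ntot k * (Theta_coeff * D0 * exp (- decay_rate * s))"
    using lam_pos[OF k] Ntot_pos[OF k] Theta_bound[OF \<open>0 \<le> s\<close>] by (intro mult_left_mono) auto
  moreover have "0 \<le> lam k * (S k s + dlt * V k s) * Th s"
    using lam_pos[OF k] S_nonneg[OF k \<open>0 \<le> s\<close>] V_nonneg[OF k \<open>0 \<le> s\<close>] dlt_nonneg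
      Theta_nonneg[OF \<open>0 \<le> s\<close>] by simp
  ultimately show "\<bar>I_rhs k s + exit_rate * I k s\<bar>
      \<le> lam k * Ntot k * Theta_coeff * D0 * exp (- decay_rate * s)"
    by (simp add: I_rhs_def algebra_simps)
qed (use initial_deviation_ge[OF k] decay_rate_lt lam_pos[OF k] Ntot_pos[OF k] Theta_coeff_nonneg
      \<open>0 \<le> t\<close> in simp_all)

lemma Q_bound:
  assumes k: "k \<in> {1..n}" and "0 \<le> t"
  shows "\<bar>Q k t\<bar> \<le> Q_coeff k * D0 * exp (- decay_rate * t)"
  unfolding Q_coeff_def
proof (rule abs_le_exp_decay[OF Q_deriv[OF k]])
  fix s :: real assume "0 \<le> s"
  show "\<bar>Q_rhs k s + (eta + d) * Q k s\<bar> \<le> beta * I_coeff k * D0 * exp (- decay_rate * s)"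
    using mult_left_mono[OF I_bound[OF k \<open>0 \<le> s\<close>], of beta] beta_pos
    by (simp add: Q_rhs_def abs_mult algebra_simps)
qed (use initial_deviation_ge[OF k] decay_rate_lt beta_pos coeffs_ge_1[OF k] \<open>0 \<le> t\<close> in simp_all)

lemma V_bound:
  assumes k: "k \<in> {1..n}" and "0 \<le> t"
  shows "\<bar>V k t - Vdf k\<bar> \<le> V_coeff k * D0 * exp (- decay_rate * t)"
  unfolding V_coeff_def
proof (rule abs_le_exp_decay[where f = "\<lambda>s. V k s - Vdf k"])
  fix s :: real assume "0 \<le> s"
  show "((\<lambda>s. V k s - Vdf k) has_real_derivative V_rhs k s) (at s within {0..})"
    using V_deriv[OF k \<open>0 \<le> s\<close>] by (auto intro!: derivative_eq_intros)
  define E where "E = exp (- decay_rate * s)"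
  have "V_rhs k s + (mu k + d + omega) * (V k s - Vdf k)
      = - (mu k * (I k s + Q k s) + lam k * (dlt * V k s) * Th s)"
    using arg_cong[OF population_const[OF k \<open>0 \<le> s\<close>], of "\<lambda>x. mu k * x"] Vdf_eq[OF k]
    by (simp add: V_rhs_def algebra_simps)
  moreover have "0 \<le> lam k * (dlt * V k s) * Th s"
    using lam_pos[OF k] dlt_nonneg V_nonneg[OF k \<open>0 \<le> s\<close>] Theta_nonneg[OF \<open>0 \<le> s\<close>] by simp
  moreover have "mu k * (I k s + Q k s) \<le> mu k * (I_coeff k + Q_coeff k) * D0 * E"
    using mu_pos[OF k] I_bound[OF k \<open>0 \<le> s\<close>] Q_bound[OF k \<open>0 \<le> s\<close>]
      mult_left_mono[of "I k s + Q k s" "(I_coeff k + Q_coeff k) * D0 * E" "mu k"]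
    by (simp add: E_def algebra_simps)
  moreover have "lam k * (dlt * V k s) * Th s \<le> lam k * Ntot k * (Theta_coeff * D0 * E)"
    using lam_pos[OF k] infected_inflow_le[OF k \<open>0 \<le> s\<close>] S_nonneg[OF k \<open>0 \<le> s\<close>]
      Theta_nonneg[OF \<open>0 \<le> s\<close>] Theta_bound[OF \<open>0 \<le> s\<close>] dlt_nonneg V_nonneg[OF k \<open>0 \<le> s\<close>]
      Ntot_pos[OF k] by (intro mult_mono mult_left_mono) (auto simp: E_def)
  moreover have "0 \<le> mu k * (I k s + Q k s)"
    using mu_pos[OF k] I_nonneg[OF k \<open>0 \<le> s\<close>] Q_nonneg[OF k \<open>0 \<le> s\<close>] by simp
  ultimately show "\<bar>V_rhs k s + (mu k + d + omega) * (V k s - Vdf k)\<bar>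
      \<le> (mu k * (I_coeff k + Q_coeff k) + lam k * Ntot k * Theta_coeff) * D0 * exp (- decay_rate * s)"
    by (simp add: E_def algebra_simps)
qed (use initial_deviation_ge[OF k] decay_rate_lt(4)[OF k] mu_pos[OF k] lam_pos[OF k] Ntot_pos[OF k]
      coeffs_ge_1[OF k] Theta_coeff_nonneg \<open>0 \<le> t\<close> in simp_all)

lemma S_bound:
  assumes k: "k \<in> {1..n}" and "0 \<le> t"
  shows "\<bar>S k t - Sdf k\<bar> \<le> (V_coeff k + I_coeff k + Q_coeff k) * D0 * exp (- decay_rate * t)"
proof -
  have "S k t - Sdf k = - (V k t - Vdf k) - I k t - Q k t"
    using population_const[OF assms] Sdf_plus_Vdf[OF k] by simp
  then have "\<bar>S k t - Sdf k\<bar> \<le> \<bar>V k t - Vdf k\<bar> + \<bar>I k t\<bar> + \<bar>Q k t\<bar>" by linarith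
  then show ?thesis
    using V_bound[OF assms] I_bound[OF assms] Q_bound[OF assms] by (simp add: algebra_simps)
qed

lemma deviation_bound:
  assumes k: "k \<in> {1..n}" and "0 \<le> t"
  shows "\<bar>S k t - Sdf k\<bar> \<le> deviation_coeff * D0 * exp (- decay_rate * t)"
    and "\<bar>V k t - Vdf k\<bar> \<le> deviation_coeff * D0 * exp (- decay_rate * t)"
    and "\<bar>I k t\<bar> \<le> deviation_coeff * D0 * exp (- decay_rate * t)"
    and "\<bar>Q k t\<bar> \<le> deviation_coeff * D0 * exp (- decay_rate * t)"
proof -
  have "0 \<le> D0 * exp (- decay_rate * t)"
    using initial_deviation_ge(1)[OF k] by (simp add: order_trans[OF abs_ge_zero])
  then have le: "c * D0 * exp (- decay_rate * t) \<le> deviation_coeff * D0 * exp (- decay_rate * t)"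
    if "c \<le> deviation_coeff" for c
    using mult_right_mono[OF that] by (simp add: mult.assoc)
  have "V_coeff k \<le> deviation_coeff" "I_coeff k \<le> deviation_coeff" "Q_coeff k \<le> deviation_coeff"
    using coeffs_le_deviation_coeff[OF k] coeffs_ge_1[OF k] by linarith+
  with le coeffs_le_deviation_coeff[OF k] S_bound[OF assms] V_bound[OF assms] I_bound[OF assms]
    Q_bound[OF assms]
  show "\<bar>S k t - Sdf k\<bar> \<le> deviation_coeff * D0 * exp (- decay_rate * t)"
    and "\<bar>V k t - Vdf k\<bar> \<le> deviation_coeff * D0 * exp (- decay_rate * t)"
    and "\<bar>I k t\<bar> \<le> deviation_coeff * D0 * exp (- decay_rate * t)"
    and "\<bar>Q k t\<bar> \<le> deviation_coeff * D0 * exp (- decay_rate * t)"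
    by (meson order_trans)+
qed

end

context sviqs_subthreshold
begin

lemma trajectory_deviation_bound:
  assumes "sviqs_solution n p b d Phi lam phi mu beta gamma eta omega dlt S V I Q"
    and "feasible_init n b d Phi S V I Q" and "k \<in> {1..n}" "0 \<le> t"
  defines "B \<equiv> deviation_coeff * initial_deviation V I Q * exp (- decay_rate * t)"
  shows "\<bar>S k t - Sdf k\<bar> \<le> B \<and> \<bar>V k t - Vdf k\<bar> \<le> B \<and> \<bar>I k t\<bar> \<le> B \<and> \<bar>Q k t\<bar> \<le> B"
proof -
  interpret sviqs_subthreshold_trajectory n p b d Phi lam phi mu beta gamma eta omega dlt S V I Q
    by unfold_locales (fact assms)+
  show ?thesis using deviation_bound[OF assms(3,4)] by (simp add: B_def)
qed

lemma lyapunov_stable: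
  "\<forall>\<epsilon>>0. \<exists>\<delta>>0. \<forall>S V I Q.
     sviqs_solution n p b d Phi lam phi mu beta gamma eta omega dlt S V I Q \<and>
     feasible_init n b d Phi S V I Q \<and>
     (\<forall>k\<in>{1..n}. \<bar>S k 0 - Sdf k\<bar> < \<delta> \<and> \<bar>V k 0 - Vdf k\<bar> < \<delta> \<and> \<bar>I k 0\<bar> < \<delta> \<and> \<bar>Q k 0\<bar> < \<delta>)
     \<longrightarrow> (\<forall>t\<ge>0. \<forall>k\<in>{1..n}. \<bar>S k t - Sdf k\<bar> < \<epsilon> \<and> \<bar>V k t - Vdf k\<bar> < \<epsilon> \<and>
                              \<bar>I k t\<bar> < \<epsilon> \<and> \<bar>Q k t\<bar> < \<epsilon>)"
  (is "\<forall>\<epsilon>>0. ?stable \<epsilon>")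
proof (intro allI impI)
  fix \<epsilon> :: real assume "0 < \<epsilon>"
  define \<delta> where "\<delta> = \<epsilon> / (3 * real n * deviation_coeff + 1)"
  have "0 < 3 * real n * deviation_coeff + 1" using deviation_coeff_nonneg by (simp add: add_nonneg_pos)
  then have "0 < \<delta>" and small: "deviation_coeff * (3 * real n * \<delta>) < \<epsilon>"
    using \<open>0 < \<epsilon>\<close> by (simp_all add: \<delta>_def field_simps)
  have "\<bar>S k t - Sdf k\<bar> < \<epsilon> \<and> \<bar>V k t - Vdf k\<bar> < \<epsilon> \<and> \<bar>I k t\<bar> < \<epsilon> \<and> \<bar>Q k t\<bar> < \<epsilon>"
    if H: "sviqs_solution n p b d Phi lam phi mu beta gamma eta omega dlt S V I Q"
      "feasible_init n b d Phi S V I Q"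
      "\<forall>k\<in>{1..n}. \<bar>S k 0 - Sdf k\<bar> < \<delta> \<and> \<bar>V k 0 - Vdf k\<bar> < \<delta> \<and> \<bar>I k 0\<bar> < \<delta> \<and> \<bar>Q k 0\<bar> < \<delta>"
      and "0 \<le> t" "k \<in> {1..n}" for S V I Q t k
  proof -
    have "0 \<le> initial_deviation V I Q" by (simp add: initial_deviation_def sum_nonneg)
    then have "deviation_coeff * initial_deviation V I Q * exp (- decay_rate * t)
        \<le> deviation_coeff * initial_deviation V I Q"
      using deviation_coeff_nonneg decay_rate_pos \<open>0 \<le> t\<close> by (simp add: mult_left_le)
    also have "\<dots> \<le> deviation_coeff * (3 * real n * \<delta>)"
      using initial_deviation_lt[where \<delta> = \<delta> and V = V and I = I and Q = Q] H(3) deviation_coeff_nonneg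
      by (intro mult_left_mono) (auto dest: less_imp_le)
    finally show ?thesis
      using trajectory_deviation_bound[OF H(1,2) \<open>k \<in> {1..n}\<close> \<open>0 \<le> t\<close>] small by linarith
  qed
  with \<open>0 < \<delta>\<close> show "?stable \<epsilon>" by blast
qed

lemma globally_attractive:
  "\<forall>S V I Q.
     sviqs_solution n p b d Phi lam phi mu beta gamma eta omega dlt S V I Q \<and>
     feasible_init n b d Phi S V I Q
     \<longrightarrow> (\<forall>k\<in>{1..n}. (S k \<longlongrightarrow> Sdf k) at_top \<and> (V k \<longlongrightarrow> Vdf k) at_top \<and>
                      (I k \<longlongrightarrow> 0) at_top \<and> (Q k \<longlongrightarrow> 0) at_top)"
proof (intro allI impI ballI)
  fix S V I Q k
  define C where "C = deviation_coeff * initial_deviation V I Q"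
  assume "sviqs_solution n p b d Phi lam phi mu beta gamma eta omega dlt S V I Q \<and>
    feasible_init n b d Phi S V I Q" and "k \<in> {1..n}"
  then have bound: "\<bar>S k t - Sdf k\<bar> \<le> C * exp (- decay_rate * t) \<and>
      \<bar>V k t - Vdf k\<bar> \<le> C * exp (- decay_rate * t) \<and>
      \<bar>I k t - 0\<bar> \<le> C * exp (- decay_rate * t) \<and> \<bar>Q k t - 0\<bar> \<le> C * exp (- decay_rate * t)"
    if "0 \<le> t" for t
    using trajectory_deviation_bound[of S V I Q k t] that by (simp add: C_def)
  show "(S k \<longlongrightarrow> Sdf k) at_top \<and> (V k \<longlongrightarrow> Vdf k) at_top \<and>
      (I k \<longlongrightarrow> 0) at_top \<and> (Q k \<longlongrightarrow> 0) at_top"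
    using tendsto_of_exp_decay_bound[OF _ decay_rate_pos] bound by meson
qed

end

theorem theorem4p7:
  fixes n :: nat and p :: "nat \<Rightarrow> real" and b d Phi :: real
    and lam phi mu :: "nat \<Rightarrow> real" and beta gamma eta omega dlt :: real
  assumes n_pos: "n \<ge> 1"
    and p_pos: "\<forall>k\<in>{1..n}. p k > 0"
    and p_sum: "(\<Sum>k=1..n. p k) = 1"
    and bd: "b > d" "d > 0"
    and Phi_pos: "Phi > 0"
    and Phi_fix: "Phi = (1 / mean_deg n p) *
                    (\<Sum>i=1..n. real i * p i * b * Phi / (d + b * real i * Phi))"
    and lam_pos: "\<forall>k\<in>{1..n}. lam k > 0"
    and phi_pos: "\<forall>k\<in>{1..n}. phi k > 0"
    and mu_pos: "\<forall>k\<in>{1..n}. mu k > 0"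
    and params: "beta > 0" "gamma > 0" "eta > 0" "omega > 0"
    and dlt: "0 \<le> dlt" "dlt \<le> 1"
    and R0: "R0_tilde n p b d Phi lam phi beta gamma < 1"
  shows
    "(\<forall>\<epsilon>>0. \<exists>\<delta>>0. \<forall>S V I Q.
        sviqs_solution n p b d Phi lam phi mu beta gamma eta omega dlt S V I Q \<and>
        feasible_init n b d Phi S V I Q \<and>
        (\<forall>k\<in>{1..n}. \<bar>S k 0 - S0 b d Phi mu omega k\<bar> < \<delta> \<and>
                     \<bar>V k 0 - V0 b d Phi mu omega k\<bar> < \<delta> \<and>
                     \<bar>I k 0\<bar> < \<delta> \<and> \<bar>Q k 0\<bar> < \<delta>)
        \<longrightarrow> (\<forall>t\<ge>0. \<forall>k\<in>{1..n}. \<bar>S k t - S0 b d Phi mu omega k\<bar> < \<epsilon> \<and>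
                     \<bar>V k t - V0 b d Phi mu omega k\<bar> < \<epsilon> \<and>
                     \<bar>I k t\<bar> < \<epsilon> \<and> \<bar>Q k t\<bar> < \<epsilon>))
     \<and>
     (\<forall>S V I Q.
        sviqs_solution n p b d Phi lam phi mu beta gamma eta omega dlt S V I Q \<and>
        feasible_init n b d Phi S V I Q
        \<longrightarrow> (\<forall>k\<in>{1..n}. ((S k) \<longlongrightarrow> S0 b d Phi mu omega k) at_top \<and>
                         ((V k) \<longlongrightarrow> V0 b d Phi mu omega k) at_top \<and>
                         ((I k) \<longlongrightarrow> 0) at_top \<and>
                         ((Q k) \<longlongrightarrow> 0) at_top))"
proof -
  interpret sviqs_subthreshold n p b d Phi lam phi mu beta gamma eta omega dlt
    by unfold_locales (use assms in auto)
  show ?thesis using lyapunov_stable globally_attractive by blast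
qed

end
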